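(* Let $G_1$ and $G_2$ be graphs with transition matrices $H_{G_1}(t)$ and $H_{G_2}(t)$. Suppose that $G_1$ is periodic at a vertex $u$ at time $\tau\neq 0$, i.e. $H_{G_1}(\tau)e_u=\gamma e_u$ for some $|\gamma|=1$, and that $G_2$ exhibits perfect state transfer from a vertex $v$ to a vertex $w$ at time $\eta\neq 0$, i.e. $H_{G_2}(\eta)e_w=\gamma' e_v$ for some $|\gamma'|=1$. If $\tau$ and $\eta$ are linearly independent over $\mathbb Q$, then the Cartesian product $G_1\square G_2$ has pretty good state transfer between the vertices $(u,v)$ and $(u,w)$.
   Context: The transition matrix of a graph with adjacency matrix $A$ is $H(t)=\exp(-itA)$, $t\in\mathbb R$; $e_u$ is the standard basis vector of vertex $u$. The Cartesian product $G_1\square G_2$ has vertex set $V(G_1)\times V(G_2)$, with $(u_1,u_2)\sim(v_1,v_2)$ iff either $u_1\sim v_1$ in $G_1$ and $u_2=v_2$, or $u_1=v_1$ and $u_2\sim v_2$ in $G_2$. A graph has pretty good state transfer between vertices $x$ and $y$ if for every $\epsilon>0$ there is $t\in\mathbb R$ with $\big||e_x^TH(t)e_y|-1\big|<\epsilon$. *)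

theory Defs
  imports "HOL-Analysis.Analysis"
begin

definition simple_graph :: "('v \<Rightarrow> 'v \<Rightarrow> bool) \<Rightarrow> bool" where
  "simple_graph E \<longleftrightarrow> (\<forall>x y. E x y \<longrightarrow> E y x) \<and> (\<forall>x. \<not> E x x)"

definition adj_matrix :: "('v::finite \<Rightarrow> 'v \<Rightarrow> bool) \<Rightarrow> complex ^'v ^'v" where
  "adj_matrix E = (\<chi> i j. if E i j then 1 else 0)"

definition mat_pow :: "complex ^'n ^'n \<Rightarrow> nat \<Rightarrow> complex ^'n ^'n" where
  "mat_pow M k = ((\<lambda>B. B ** M) ^^ k) (mat 1)"

definition mat_exp :: "complex ^'n ^'n \<Rightarrow> complex ^'n ^'n" where
  "mat_exp M = (\<Sum>k. (1 / fact k) *\<^sub>R mat_pow M k)"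

definition transition :: "('v::finite \<Rightarrow> 'v \<Rightarrow> bool) \<Rightarrow> real \<Rightarrow> complex ^'v ^'v" where
  "transition E t = mat_exp (\<chi> i j. (- \<i> * complex_of_real t) * adj_matrix E $ i $ j)"

definition cart_prod :: "('a \<Rightarrow> 'a \<Rightarrow> bool) \<Rightarrow> ('b \<Rightarrow> 'b \<Rightarrow> bool) \<Rightarrow> ('a \<times> 'b) \<Rightarrow> ('a \<times> 'b) \<Rightarrow> bool" where
  "cart_prod E1 E2 = (\<lambda>(u1, u2) (v1, v2). (E1 u1 v1 \<and> u2 = v2) \<or> (u1 = v1 \<and> E2 u2 v2))"

definition pgst :: "('v::finite \<Rightarrow> 'v \<Rightarrow> bool) \<Rightarrow> 'v \<Rightarrow> 'v \<Rightarrow> bool" where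
  "pgst E x y \<longleftrightarrow> (\<forall>\<epsilon>>0. \<exists>t::real. \<bar>cmod (transition E t $ x $ y) - 1\<bar> < \<epsilon>)"

end

theory Submission
  imports Defs
begin

text \<open>
  The two summands of the adjacency matrix of \<open>G\<^sub>1 \<box> G\<^sub>2\<close> commute, so its transition matrix
  is the Kronecker product \<open>H\<^sub>1(t) \<otimes> H\<^sub>2(t)\<close>. At every multiple \<open>k\<tau>\<close> the vertex \<open>u\<close> returns
  to itself up to a phase, and since perfect state transfer is symmetric, at every odd multiple
  \<open>(2n+1)\<eta>\<close> the vertex \<open>w\<close> is sent to \<open>v\<close> up to a phase. Hence the \<open>((u,v),(u,w))\<close> entry of
  \<open>H(k\<tau>)\<close> has the modulus of the \<open>(v,v)\<close> entry of \<open>H\<^sub>2(k\<tau> - (2n+1)\<eta>)\<close>. As \<open>\<tau>/\<eta>\<close> is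
  irrational, Kronecker's theorem makes \<open>k\<tau> - (2n+1)\<eta>\<close> arbitrarily small, and continuity of
  \<open>H\<^sub>2\<close> at \<open>0\<close> brings that entry arbitrarily close to \<open>1\<close>.
\<close>

section \<open>Matrix exponentials\<close>

text \<open>Bounded operators on \<open>\<complex>\<^sup>n\<close> form a Banach algebra, where the library's \<open>exp\<close> and
  \<open>exp_add_commuting\<close> apply; matrices are transported there and back.\<close>

typedef (overloaded) ('n::finite) endo = "UNIV :: ((complex^'n) \<Rightarrow>\<^sub>L (complex^'n)) set"
  morphisms blinfun_of_endo Endo
  by simp

setup_lifting type_definition_endo

instantiation endo :: (finite) real_normed_vector
begin
lift_definition norm_endo :: "'a endo \<Rightarrow> real" is norm .
lift_definition minus_endo :: "'a endo \<Rightarrow> 'a endo \<Rightarrow> 'a endo" is "(-)" .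
lift_definition plus_endo :: "'a endo \<Rightarrow> 'a endo \<Rightarrow> 'a endo" is "(+)" .
lift_definition uminus_endo :: "'a endo \<Rightarrow> 'a endo" is uminus .
lift_definition zero_endo :: "'a endo" is 0 .
lift_definition scaleR_endo :: "real \<Rightarrow> 'a endo \<Rightarrow> 'a endo" is scaleR .
definition dist_endo :: "'a endo \<Rightarrow> 'a endo \<Rightarrow> real" where "dist_endo a b = norm (a - b)"
definition uniformity_endo :: "('a endo \<times> 'a endo) filter" where
  "uniformity_endo = (INF e\<in>{0 <..}. principal {(x, y). dist x y < e})"
definition open_endo :: "'a endo set \<Rightarrow> bool" where
  "open_endo S = (\<forall>x\<in>S. \<forall>\<^sub>F (x', y) in uniformity. x' = x \<longrightarrow> y \<in> S)"
definition sgn_endo :: "'a endo \<Rightarrow> 'a endo" where "sgn_endo x = inverse (norm x) *\<^sub>R x"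
instance
  by standard
    (unfold dist_endo_def open_endo_def sgn_endo_def uniformity_endo_def,
     (rule refl | (transfer, force simp: norm_triangle_ineq algebra_simps scaleR_add_right scaleR_add_left))+)
end

instantiation endo :: (finite) real_normed_algebra_1
begin
lift_definition times_endo :: "'a endo \<Rightarrow> 'a endo \<Rightarrow> 'a endo" is "(o\<^sub>L)" .
lift_definition one_endo :: "'a endo" is id_blinfun .
instance
proof
  fix a b c :: "'a endo" and r :: real
  show "a * b * c = a * (b * c)" "1 * a = a" "a * 1 = a"
    "(a + b) * c = a * c + b * c" "a * (b + c) = a * b + a * c"
    "r *\<^sub>R a * b = r *\<^sub>R (a * b)" "a * r *\<^sub>R b = r *\<^sub>R (a * b)"
    by (transfer, rule blinfun_eqI, simp add: blinfun.bilinear_simps)+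
  show "norm (a * b) \<le> norm a * norm b"
    by transfer (rule norm_blinfun_compose)
  show "norm (1::'a endo) = 1"
    by transfer simp
  show "(0::'a endo) \<noteq> 1"
  proof
    assume "(0::'a endo) = 1"
    then have "blinfun_of_endo 0 (axis undefined 1) = blinfun_of_endo 1 (axis undefined 1)"
      by simp
    then show False
      by (simp add: zero_endo.rep_eq one_endo.rep_eq)
  qed
qed
end

instance endo :: (finite) banach
proof
  fix X :: "nat \<Rightarrow> 'a endo"
  assume "Cauchy X"
  then have "Cauchy (\<lambda>n. blinfun_of_endo (X n))"
    unfolding Cauchy_def dist_norm by (simp add: norm_endo.rep_eq minus_endo.rep_eq)
  then obtain L where "(\<lambda>n. blinfun_of_endo (X n)) \<longlonglongrightarrow> L"
    using Cauchy_convergent_iff convergent_def by blast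
  then have "X \<longlonglongrightarrow> Endo L"
    unfolding LIMSEQ_iff dist_norm by (simp add: norm_endo.rep_eq minus_endo.rep_eq Endo_inverse)
  then show "convergent X"
    unfolding convergent_def by blast
qed

definition endo_of_matrix :: "complex^'n^'n \<Rightarrow> 'n::finite endo" where
  "endo_of_matrix M = Endo (Blinfun ((*v) M))"

definition matrix_of_endo :: "'n::finite endo \<Rightarrow> complex^'n^'n" where
  "matrix_of_endo f = (\<chi> i j. blinfun_of_endo f (axis j 1) $ i)"

lemma matrix_vector_mult_axis: "(M *v axis j 1) $ i = M $ i $ j"
  by (simp add: matrix_vector_mult_def axis_def if_distrib cong: if_cong)

lemma blinfun_of_endo_of_matrix: "blinfun_of_endo (endo_of_matrix M) x = M *v x"
  by (simp add: endo_of_matrix_def Endo_inverse bounded_linear_Blinfun_apply)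

lemma matrix_of_endo_of_matrix [simp]: "matrix_of_endo (endo_of_matrix M) = M"
  by (simp add: matrix_of_endo_def blinfun_of_endo_of_matrix matrix_vector_mult_axis vec_eq_iff)

lemma endo_of_matrix_eqI:
  assumes "\<And>x. blinfun_of_endo f x = M *v x"
  shows "endo_of_matrix M = f"
  by (metis assms blinfun_eqI blinfun_of_endo_inverse blinfun_of_endo_of_matrix)

lemma endo_of_matrix_mult: "endo_of_matrix (M ** N) = endo_of_matrix M * endo_of_matrix N"
  by (rule endo_of_matrix_eqI)
    (simp add: times_endo.rep_eq blinfun_of_endo_of_matrix matrix_vector_mul_assoc)

lemma endo_of_matrix_one: "endo_of_matrix (mat 1) = 1"
  by (rule endo_of_matrix_eqI) (simp add: one_endo.rep_eq)

lemma bounded_linear_endo_of_matrix: "bounded_linear (endo_of_matrix :: complex^'n^'n \<Rightarrow> 'n::finite endo)"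
proof -
  have "linear (endo_of_matrix :: complex^'n^'n \<Rightarrow> 'n endo)"
  proof (rule linearI)
    show "endo_of_matrix (M + N) = endo_of_matrix M + endo_of_matrix N" for M N :: "complex^'n^'n"
      by (rule endo_of_matrix_eqI)
        (simp add: plus_endo.rep_eq blinfun.add_left blinfun_of_endo_of_matrix matrix_vector_mult_add_rdistrib)
    show "endo_of_matrix (r *\<^sub>R M) = r *\<^sub>R endo_of_matrix M" for r and M :: "complex^'n^'n"
      by (rule endo_of_matrix_eqI)
        (simp add: scaleR_endo.rep_eq scaleR_blinfun.rep_eq blinfun_of_endo_of_matrix vec_eq_iff
          matrix_vector_mult_def scaleR_sum_right)
  qed
  then show ?thesis
    using linear_conv_bounded_linear by blast
qed

lemma norm_vec_le_sum_norm: "norm x \<le> (\<Sum>i\<in>UNIV. norm (x $ i))"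
  by (simp add: norm_vec_def L2_set_le_sum)

lemma norm_matrix_of_endo_entry: "norm (matrix_of_endo f $ i $ j) \<le> norm f"
proof -
  have "norm (matrix_of_endo f $ i $ j) \<le> norm (blinfun_of_endo f (axis j 1))"
    unfolding matrix_of_endo_def by (simp add: Finite_Cartesian_Product.norm_nth_le)
  also have "\<dots> \<le> norm (blinfun_of_endo f) * norm (axis j (1::complex))"
    by (rule norm_blinfun)
  finally show ?thesis
    by (simp add: norm_endo.rep_eq)
qed

lemma bounded_linear_matrix_of_endo: "bounded_linear (matrix_of_endo :: 'n::finite endo \<Rightarrow> _)"
proof (rule bounded_linear_intro[where K = "real CARD('n) * real CARD('n)"])
  fix f g :: "'n endo" and r :: real
  show "matrix_of_endo (f + g) = matrix_of_endo f + matrix_of_endo g"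
    by (simp add: matrix_of_endo_def vec_eq_iff plus_endo.rep_eq blinfun.add_left)
  show "matrix_of_endo (r *\<^sub>R f) = r *\<^sub>R matrix_of_endo f"
    by (simp add: matrix_of_endo_def vec_eq_iff scaleR_endo.rep_eq scaleR_blinfun.rep_eq)
  have "norm (matrix_of_endo f) \<le> (\<Sum>i\<in>UNIV. norm (matrix_of_endo f $ i))"
    by (rule norm_vec_le_sum_norm)
  also have "\<dots> \<le> (\<Sum>i\<in>UNIV. \<Sum>j\<in>UNIV. norm (matrix_of_endo f $ i $ j))"
    by (intro sum_mono norm_vec_le_sum_norm)
  also have "\<dots> \<le> (\<Sum>i\<in>(UNIV::'n set). \<Sum>j\<in>(UNIV::'n set). norm f)"
    by (intro sum_mono norm_matrix_of_endo_entry)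
  finally show "norm (matrix_of_endo f) \<le> norm f * (real CARD('n) * real CARD('n))"
    by (simp add: mult_ac)
qed

lemma mat_pow_0 [simp]: "mat_pow M 0 = mat 1"
  by (simp add: mat_pow_def)

lemma mat_pow_Suc: "mat_pow M (Suc k) = mat_pow M k ** M"
  by (simp add: mat_pow_def)

lemma endo_of_matrix_pow: "endo_of_matrix (mat_pow M k) = endo_of_matrix M ^ k"
  by (induction k) (simp_all add: endo_of_matrix_one mat_pow_Suc endo_of_matrix_mult power_commutes)

lemma mat_exp_sums: "(\<lambda>k. (1 / fact k) *\<^sub>R mat_pow M k) sums matrix_of_endo (exp (endo_of_matrix M))"
proof -
  have "(\<lambda>k. matrix_of_endo (endo_of_matrix M ^ k /\<^sub>R fact k)) sums matrix_of_endo (exp (endo_of_matrix M))"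
    by (rule bounded_linear.sums[OF bounded_linear_matrix_of_endo exp_converges])
  moreover have "matrix_of_endo (endo_of_matrix M ^ k /\<^sub>R fact k) = (1 / fact k) *\<^sub>R mat_pow M k" for k
    by (simp add: linear_simps[OF bounded_linear_matrix_of_endo] endo_of_matrix_pow[symmetric]
        divide_inverse)
  ultimately show ?thesis
    by simp
qed

lemma mat_exp_eq: "mat_exp M = matrix_of_endo (exp (endo_of_matrix M))"
  unfolding mat_exp_def using mat_exp_sums sums_unique by metis

lemma mat_exp_transfer:
  assumes "bounded_linear f" "\<And>k. f (mat_pow M k) = g k"
  shows "(\<lambda>k. (1 / fact k) *\<^sub>R g k) sums f (mat_exp M)"
  using bounded_linear.sums[OF assms(1) mat_exp_sums[of M], folded mat_exp_eq]
  by (simp add: linear_simps[OF assms(1)] assms(2))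

lemma endo_of_mat_exp: "endo_of_matrix (mat_exp M) = exp (endo_of_matrix M)"
proof -
  have "(\<lambda>k. (1 / fact k) *\<^sub>R endo_of_matrix M ^ k) sums endo_of_matrix (mat_exp M)"
    by (rule mat_exp_transfer[OF bounded_linear_endo_of_matrix endo_of_matrix_pow])
  with exp_converges[of "endo_of_matrix M"] show ?thesis
    by (simp add: divide_inverse sums_unique2)
qed

lemma mat_exp_morphism:
  assumes "bounded_linear f" "\<And>k. f (mat_pow M k) = mat_pow N k"
  shows "f (mat_exp M) = mat_exp N"
  using mat_exp_transfer[OF assms] mat_exp_sums[of N] by (simp add: mat_exp_eq sums_unique2)

lemma mat_exp_add:
  assumes "X ** Y = Y ** X"
  shows "mat_exp (X + Y) = mat_exp X ** mat_exp Y"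
proof -
  have "endo_of_matrix X * endo_of_matrix Y = endo_of_matrix Y * endo_of_matrix X"
    by (simp add: endo_of_matrix_mult[symmetric] assms)
  then have "exp (endo_of_matrix (X + Y)) = exp (endo_of_matrix X) * exp (endo_of_matrix Y)"
    by (simp add: linear_simps[OF bounded_linear_endo_of_matrix] exp_add_commuting)
  also have "\<dots> = endo_of_matrix (mat_exp X ** mat_exp Y)"
    by (simp add: endo_of_matrix_mult endo_of_mat_exp)
  finally show ?thesis
    by (metis mat_exp_eq matrix_of_endo_of_matrix)
qed

lemma mat_exp_0: "mat_exp 0 = mat 1"
  by (simp add: mat_exp_eq linear_simps[OF bounded_linear_endo_of_matrix] endo_of_matrix_one[symmetric])

lemma continuous_on_mat_exp_scaleR: "continuous_on UNIV (\<lambda>t. mat_exp (t *\<^sub>R M))"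
proof -
  have "continuous_on UNIV (\<lambda>t. exp (t *\<^sub>R endo_of_matrix M))"
    by (metis continuous_at_imp_continuous_on exp_scaleR_has_vector_derivative_right
        has_vector_derivative_continuous)
  then have "continuous_on UNIV (\<lambda>t. matrix_of_endo (exp (t *\<^sub>R endo_of_matrix M)))"
    by (rule continuous_on_compose2[OF linear_continuous_on[OF bounded_linear_matrix_of_endo]]) auto
  then show ?thesis
    by (simp add: mat_exp_eq linear_simps[OF bounded_linear_endo_of_matrix])
qed

definition skew_adj_matrix :: "('v::finite \<Rightarrow> 'v \<Rightarrow> bool) \<Rightarrow> complex^'v^'v" where
  "skew_adj_matrix E = (\<chi> i j. - \<i> * adj_matrix E $ i $ j)"

lemma transition_eq: "transition E t = mat_exp (t *\<^sub>R skew_adj_matrix E)"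
  unfolding transition_def skew_adj_matrix_def
  by (rule arg_cong[where f = mat_exp]) (simp add: vec_eq_iff, simp add: scaleR_conv_of_real mult_ac)

lemma transition_add: "transition E (s + t) = transition E s ** transition E t"
  unfolding transition_eq scaleR_add_left
  by (rule mat_exp_add) (simp add: scalar_matrix_assoc[symmetric] matrix_scalar_ac)

lemma transition_0: "transition E 0 = mat 1"
  by (simp add: transition_eq mat_exp_0)

lemma cnj_transition: "map_matrix cnj (transition E t) = transition E (- t)"
proof -
  have linear_cnj: "bounded_linear (map_matrix cnj :: complex^'v^'v \<Rightarrow> _)"
    by (rule linear_conv_bounded_linear[THEN iffD1], rule linearI) (simp_all add: vec_eq_iff)
  have cnj_pow: "map_matrix cnj (mat_pow M k) = mat_pow (map_matrix cnj M) k" for M :: "complex^'v^'v" and k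
    by (induction k) (simp_all add: mat_pow_Suc vec_eq_iff matrix_matrix_mult_def mat_def)
  have cnj_generator: "map_matrix cnj (t *\<^sub>R skew_adj_matrix E) = (- t) *\<^sub>R skew_adj_matrix E"
    by (simp add: vec_eq_iff skew_adj_matrix_def adj_matrix_def)
  show ?thesis
    unfolding transition_eq by (rule mat_exp_morphism[OF linear_cnj]) (simp only: cnj_pow cnj_generator)
qed

lemma continuous_transition_entry: "isCont (\<lambda>t. transition E t $ i $ j) t"
proof -
  have "continuous_on UNIV (\<lambda>t. transition E t $ i $ j)"
    unfolding transition_eq
    by (intro continuous_on_compose2[OF linear_continuous_on[OF bounded_linear_vec_nth]]
        continuous_on_mat_exp_scaleR) auto
  then show ?thesis
    by (simp add: continuous_on_eq_continuous_at)
qed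

lemma transition_diag_close:
  assumes "e > 0"
  obtains d where "d > 0" "\<And>t. \<bar>t\<bar> < d \<Longrightarrow> \<bar>cmod (transition E t $ i $ i) - 1\<bar> < e"
proof -
  have "isCont (\<lambda>t. cmod (transition E t $ i $ i)) 0"
    by (intro continuous_intros continuous_transition_entry)
  moreover have "cmod (transition E 0 $ i $ i) = 1"
    by (simp add: transition_0 mat_def)
  ultimately obtain d where "d > 0" "\<And>t. dist t 0 < d \<Longrightarrow> dist (cmod (transition E t $ i $ i)) 1 < e"
    using assms unfolding continuous_at_eps_delta by metis
  then show thesis
    using that by (simp add: dist_real_def)
qed

section \<open>Cartesian products\<close>

definition lift_fst :: "complex^'a^'a \<Rightarrow> complex^('a::finite \<times> 'b::finite)^('a \<times> 'b)" where
  "lift_fst M = (\<chi> x y. if snd x = snd y then M $ fst x $ fst y else 0)"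

definition lift_snd :: "complex^'b^'b \<Rightarrow> complex^('a::finite \<times> 'b::finite)^('a \<times> 'b)" where
  "lift_snd M = (\<chi> x y. if fst x = fst y then M $ snd x $ snd y else 0)"

lemma sum_UNIV_prod: "(\<Sum>x\<in>UNIV. f x) = (\<Sum>a\<in>UNIV. \<Sum>b\<in>UNIV. f (a, b))"
  using sum.cartesian_product'[of f UNIV UNIV] by simp

lemma lift_fst_mult: "lift_fst (A ** B) = lift_fst A ** lift_fst B"
  unfolding lift_fst_def matrix_matrix_mult_def
  by (simp add: vec_eq_iff sum_UNIV_prod if_distrib[where f = "\<lambda>x. x * _"] cong: if_cong)

lemma lift_snd_mult: "lift_snd (A ** B) = lift_snd A ** lift_snd B"
  unfolding lift_snd_def matrix_matrix_mult_def
  by (simp add: vec_eq_iff sum_UNIV_prod sum.swap[where A = UNIV] if_distrib[where f = "\<lambda>x. x * _"]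
      cong: if_cong)

lemma lift_fst_mult_lift_snd: "(lift_fst A ** lift_snd B) $ x $ y = A $ fst x $ fst y * B $ snd x $ snd y"
  unfolding lift_fst_def lift_snd_def matrix_matrix_mult_def
  by (simp add: sum_UNIV_prod sum.swap[where A = UNIV] if_distrib[where f = "\<lambda>x. x * _"]
      if_distrib[where f = "\<lambda>x. _ * x"] cong: if_cong)

lemma lift_snd_mult_lift_fst: "(lift_snd B ** lift_fst A) $ x $ y = A $ fst x $ fst y * B $ snd x $ snd y"
  unfolding lift_fst_def lift_snd_def matrix_matrix_mult_def
  by (simp add: sum_UNIV_prod if_distrib[where f = "\<lambda>x. x * _"] if_distrib[where f = "\<lambda>x. _ * x"]
      cong: if_cong)

lemma mat_exp_lift_fst: "lift_fst (mat_exp M) = mat_exp (lift_fst M)"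
proof (rule mat_exp_morphism)
  show "bounded_linear (lift_fst :: complex^'a^'a \<Rightarrow> complex^('a \<times> 'b)^('a \<times> 'b))"
    by (rule linear_conv_bounded_linear[THEN iffD1], rule linearI) (simp_all add: vec_eq_iff lift_fst_def)
  show "lift_fst (mat_pow M k) = mat_pow (lift_fst M) k" for k
    by (induction k) (simp_all add: mat_pow_Suc lift_fst_mult, simp add: vec_eq_iff lift_fst_def mat_def prod_eq_iff)
qed

lemma mat_exp_lift_snd: "lift_snd (mat_exp M) = mat_exp (lift_snd M)"
proof (rule mat_exp_morphism)
  show "bounded_linear (lift_snd :: complex^'b^'b \<Rightarrow> complex^('a \<times> 'b)^('a \<times> 'b))"
    by (rule linear_conv_bounded_linear[THEN iffD1], rule linearI) (simp_all add: vec_eq_iff lift_snd_def)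
  show "lift_snd (mat_pow M k) = mat_pow (lift_snd M) k" for k
    by (induction k) (simp_all add: mat_pow_Suc lift_snd_mult, simp add: vec_eq_iff lift_snd_def mat_def prod_eq_iff)
qed

text \<open>Loops in \<open>E1\<close> would be counted twice on the diagonal of the product's adjacency matrix.\<close>

lemma skew_adj_matrix_cart_prod:
  assumes "\<And>x. \<not> E1 x x"
  shows "skew_adj_matrix (cart_prod E1 E2) = lift_fst (skew_adj_matrix E1) + lift_snd (skew_adj_matrix E2)"
  by (simp add: vec_eq_iff skew_adj_matrix_def lift_fst_def lift_snd_def adj_matrix_def cart_prod_def
      prod_eq_iff assms split: prod.splits)

lemma transition_cart_prod:
  assumes "\<And>x. \<not> E1 x x"
  shows "transition (cart_prod E1 E2) t $ x $ y
    = transition E1 t $ fst x $ fst y * transition E2 t $ snd x $ snd y"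
proof -
  have "transition (cart_prod E1 E2) t
      = mat_exp (lift_fst (t *\<^sub>R skew_adj_matrix E1) + lift_snd (t *\<^sub>R skew_adj_matrix E2))"
    unfolding transition_eq skew_adj_matrix_cart_prod[OF assms]
    by (rule arg_cong[where f = mat_exp]) (simp add: vec_eq_iff lift_fst_def lift_snd_def scaleR_add_right)
  also have "\<dots> = lift_fst (transition E1 t) ** lift_snd (transition E2 t)"
    by (subst mat_exp_add)
      (simp_all add: vec_eq_iff lift_fst_mult_lift_snd lift_snd_mult_lift_fst transition_eq
        mat_exp_lift_fst mat_exp_lift_snd)
  finally show ?thesis
    by (simp add: lift_fst_mult_lift_snd)
qed

section \<open>Perfect state transfer and periodicity\<close>

lemma matrix_vector_mult_axis_eq:
  "M *v axis w 1 = c *s axis v 1 \<longleftrightarrow> (\<forall>x. M $ x $ w = (if x = v then c else 0))"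
  unfolding vec_eq_iff matrix_vector_mult_axis vector_smult_component by (simp add: axis_def)

definition pst :: "('v::finite \<Rightarrow> 'v \<Rightarrow> bool) \<Rightarrow> 'v \<Rightarrow> 'v \<Rightarrow> real \<Rightarrow> bool" where
  "pst E v w t \<longleftrightarrow> (\<exists>\<gamma>. cmod \<gamma> = 1 \<and> transition E t *v axis w 1 = \<gamma> *s axis v 1)"

abbreviation periodic :: "('v::finite \<Rightarrow> 'v \<Rightarrow> bool) \<Rightarrow> 'v \<Rightarrow> real \<Rightarrow> bool" where
  "periodic E u t \<equiv> pst E u u t"

lemma pst_0: "pst E v v 0"
  unfolding pst_def by (intro exI[of _ 1]) (simp add: transition_0)

lemma pst_add:
  assumes "pst E x y s" "pst E y z t"
  shows "pst E x z (s + t)"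
proof -
  obtain \<beta> \<gamma> where "cmod \<beta> = 1" "transition E s *v axis y 1 = \<beta> *s axis x 1"
    and "cmod \<gamma> = 1" "transition E t *v axis z 1 = \<gamma> *s axis y 1"
    using assms unfolding pst_def by blast
  then have "transition E (s + t) *v axis z 1 = (\<gamma> * \<beta>) *s axis x 1"
    by (simp add: transition_add matrix_vector_mul_assoc[symmetric] vector_scalar_commute vector_smult_assoc)
  with \<open>cmod \<beta> = 1\<close> \<open>cmod \<gamma> = 1\<close> show ?thesis
    unfolding pst_def by (metis mult_1 norm_mult)
qed

lemma pst_inverse:
  assumes "pst E v w t"
  shows "pst E w v (- t)"
proof -
  obtain \<gamma> where \<gamma>: "cmod \<gamma> = 1" "transition E t *v axis w 1 = \<gamma> *s axis v 1"
    using assms unfolding pst_def by blast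
  have "axis w 1 = transition E (- t) *v (transition E t *v axis w 1)"
    by (simp add: matrix_vector_mul_assoc transition_add[symmetric] transition_0)
  also have "\<dots> = \<gamma> *s (transition E (- t) *v axis v 1)"
    by (simp add: \<gamma>(2) vector_scalar_commute)
  finally have "inverse \<gamma> *s axis w 1 = inverse \<gamma> *s (\<gamma> *s (transition E (- t) *v axis v 1))"
    by simp
  moreover have "\<gamma> \<noteq> 0"
    using \<gamma>(1) by auto
  ultimately have "transition E (- t) *v axis v 1 = inverse \<gamma> *s axis w 1"
    by (simp add: vector_smult_assoc)
  with \<gamma>(1) show ?thesis
    unfolding pst_def by (metis norm_inverse inverse_1)
qed

text \<open>The adjacency matrix is real, so \<open>H(-t)\<close> is the entrywise conjugate of \<open>H(t)\<close>.\<close>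

lemma pst_uminus_time:
  assumes "pst E v w t"
  shows "pst E v w (- t)"
proof -
  obtain \<gamma> where "cmod \<gamma> = 1" "\<forall>x. transition E t $ x $ w = (if x = v then \<gamma> else 0)"
    using assms unfolding pst_def matrix_vector_mult_axis_eq by blast
  moreover have "transition E (- t) $ x $ w = cnj (transition E t $ x $ w)" for x
    by (simp flip: cnj_transition)
  ultimately show ?thesis
    unfolding pst_def matrix_vector_mult_axis_eq by (intro exI[of _ "cnj \<gamma>"]) auto
qed

lemma pst_sym: "pst E v w t \<Longrightarrow> pst E w v t"
  using pst_inverse pst_uminus_time by fastforce

lemma pst_abs: "pst E v w t \<Longrightarrow> pst E v w \<bar>t\<bar>"
  by (cases "t \<ge> 0") (simp_all add: pst_uminus_time)

lemma periodic_multiple: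
  assumes "periodic E u t"
  shows "periodic E u (real k * t)"
proof (induction k)
  case 0
  then show ?case by (simp add: pst_0)
next
  case (Suc k)
  then show ?case
    using pst_add[OF assms Suc] by (simp add: algebra_simps)
qed

lemma pst_odd_multiple:
  assumes "pst E v w t"
  shows "pst E v w (real (2 * n + 1) * t)"
proof (induction n)
  case 0
  then show ?case using assms by simp
next
  case (Suc n)
  have "pst E v w (t + (t + real (2 * n + 1) * t))"
    by (rule pst_add[OF assms pst_add[OF pst_sym[OF assms] Suc]])
  then show ?case
    by (simp add: algebra_simps)
qed

lemma cmod_transition_cart_prod:
  assumes "\<And>x. \<not> E1 x x" "periodic E1 u t" "pst E2 v w s"
  shows "cmod (transition (cart_prod E1 E2) t $ (u, v) $ (u, w)) = cmod (transition E2 (t - s) $ v $ v)"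
proof -
  obtain \<gamma> \<gamma>' where \<gamma>: "cmod \<gamma> = 1" "transition E1 t *v axis u 1 = \<gamma> *s axis u 1"
    and \<gamma>': "cmod \<gamma>' = 1" "transition E2 s *v axis w 1 = \<gamma>' *s axis v 1"
    using assms(2,3) unfolding pst_def by blast
  have "transition E2 t *v axis w 1 = transition E2 (t - s) *v (transition E2 s *v axis w 1)"
    by (simp add: matrix_vector_mul_assoc transition_add[symmetric])
  then have "transition E2 t *v axis w 1 = \<gamma>' *s (transition E2 (t - s) *v axis v 1)"
    by (simp add: \<gamma>'(2) vector_scalar_commute)
  then have "transition E2 t $ v $ w = \<gamma>' * transition E2 (t - s) $ v $ v"
    by (metis matrix_vector_mult_axis vector_smult_component)
  moreover have "transition E1 t $ u $ u = \<gamma>"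
    using \<gamma>(2) by (simp add: matrix_vector_mult_axis_eq)
  ultimately show ?thesis
    by (simp add: transition_cart_prod[OF assms(1)] norm_mult \<gamma>(1) \<gamma>'(1))
qed

lemma rat_independent_abs_ratio_irrational:
  fixes \<tau> \<eta> :: real
  assumes "\<forall>p q :: rat. of_rat p * \<tau> + of_rat q * \<eta> = 0 \<longrightarrow> p = 0 \<and> q = 0"
  shows "\<bar>\<tau>\<bar> / \<bar>\<eta>\<bar> \<notin> \<rat>"
proof
  assume "\<bar>\<tau>\<bar> / \<bar>\<eta>\<bar> \<in> \<rat>"
  then obtain r where r: "\<bar>\<tau>\<bar> / \<bar>\<eta>\<bar> = of_rat r"
    by (auto elim: Rats_cases)
  have "\<eta> \<noteq> 0"
    using assms by (metis add_0 mult_zero_left mult_zero_right of_rat_1 of_rat_0 zero_neq_one)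
  define p :: rat where "p = (if \<tau> \<ge> 0 then 1 else -1)"
  define q :: rat where "q = - r * (if \<eta> \<ge> 0 then 1 else -1)"
  have "of_rat p * \<tau> + of_rat q * \<eta> = \<bar>\<tau>\<bar> - of_rat r * \<bar>\<eta>\<bar>"
    by (simp add: p_def q_def of_rat_mult of_rat_minus)
  also have "\<dots> = 0"
    using r \<open>\<eta> \<noteq> 0\<close> by (simp add: field_simps)
  finally have "p = 0"
    using assms by blast
  then show False
    by (simp add: p_def split: if_splits)
qed

lemma odd_multiple_approx:
  fixes \<tau> \<eta> d :: real
  assumes "\<tau> > 0" "\<eta> > 0" "\<tau> / \<eta> \<notin> \<rat>" "d > 0"
  obtains k n :: nat where "\<bar>real k * \<tau> - real (2 * n + 1) * \<eta>\<bar> < d"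
proof -
  define \<theta> where "\<theta> = \<tau> / (2 * \<eta>)"
  have "\<theta> \<notin> \<rat>"
  proof
    assume "\<theta> \<in> \<rat>"
    then have "2 * \<theta> \<in> \<rat>"
      by simp
    with assms(3) show False
      by (simp add: \<theta>_def)
  qed
  then obtain k :: nat where k: "\<bar>frac (real k * \<theta>) - 1 / 2\<bar> < d / (2 * \<eta>)"
    using Kronecker_approx_1_explicit[of \<theta> "1 / 2" "d / (2 * \<eta>)"] assms by auto
  define n where "n = nat \<lfloor>real k * \<theta>\<rfloor>"
  have "real n = of_int \<lfloor>real k * \<theta>\<rfloor>"
    using assms by (simp add: n_def \<theta>_def)
  then have "real k * \<tau> - real (2 * n + 1) * \<eta> = 2 * \<eta> * (frac (real k * \<theta>) - 1 / 2)"
    using assms by (simp add: frac_def \<theta>_def field_simps)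
  also have "\<bar>\<dots>\<bar> = 2 * \<eta> * \<bar>frac (real k * \<theta>) - 1 / 2\<bar>"
    using assms by (simp add: abs_mult)
  also have "\<dots> < 2 * \<eta> * (d / (2 * \<eta>))"
    using k assms by (intro mult_strict_left_mono) auto
  also have "\<dots> = d"
    using assms by simp
  finally show thesis
    using that by blast
qed

theorem theorem4p2:
  fixes E1 :: "'a::finite \<Rightarrow> 'a \<Rightarrow> bool" and E2 :: "'b::finite \<Rightarrow> 'b \<Rightarrow> bool"
    and u :: 'a and v w :: 'b and \<tau> \<eta> :: real and \<gamma> \<gamma>' :: complex
  assumes "simple_graph E1" and "simple_graph E2"
    and "\<tau> \<noteq> 0" and "cmod \<gamma> = 1"
    and "transition E1 \<tau> *v axis u 1 = \<gamma> *s axis u 1"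
    and "\<eta> \<noteq> 0" and "cmod \<gamma>' = 1"
    and "transition E2 \<eta> *v axis w 1 = \<gamma>' *s axis v 1"
    and "\<forall>p q :: rat. of_rat p * \<tau> + of_rat q * \<eta> = 0 \<longrightarrow> p = 0 \<and> q = 0"
  shows "pgst (cart_prod E1 E2) (u, v) (u, w)"
  unfolding pgst_def
proof (intro allI impI)
  fix \<epsilon> :: real
  assume "\<epsilon> > 0"
  have loopless: "\<And>x. \<not> E1 x x"
    using assms(1) by (simp add: simple_graph_def)
  have "periodic E1 u \<tau>" and "pst E2 v w \<eta>"
    using assms(4,5,7,8) unfolding pst_def by blast+
  then have "periodic E1 u \<bar>\<tau>\<bar>" and "pst E2 v w \<bar>\<eta>\<bar>"
    by (simp_all add: pst_abs)
  obtain d where "d > 0" and close: "\<And>\<delta>. \<bar>\<delta>\<bar> < d \<Longrightarrow> \<bar>cmod (transition E2 \<delta> $ v $ v) - 1\<bar> < \<epsilon>"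
    using transition_diag_close[OF \<open>\<epsilon> > 0\<close>] by blast
  obtain k n :: nat where "\<bar>real k * \<bar>\<tau>\<bar> - real (2 * n + 1) * \<bar>\<eta>\<bar>\<bar> < d"
    using odd_multiple_approx rat_independent_abs_ratio_irrational[OF assms(9)] assms(3,6) \<open>d > 0\<close>
    by (metis zero_less_abs_iff)
  moreover have "cmod (transition (cart_prod E1 E2) (real k * \<bar>\<tau>\<bar>) $ (u, v) $ (u, w))
      = cmod (transition E2 (real k * \<bar>\<tau>\<bar> - real (2 * n + 1) * \<bar>\<eta>\<bar>) $ v $ v)"
    by (intro cmod_transition_cart_prod loopless periodic_multiple pst_odd_multiple
        \<open>periodic E1 u \<bar>\<tau>\<bar>\<close> \<open>pst E2 v w \<bar>\<eta>\<bar>\<close>)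
  ultimately show "\<exists>t. \<bar>cmod (transition (cart_prod E1 E2) t $ (u, v) $ (u, w)) - 1\<bar> < \<epsilon>"
    using close by metis
qed

end
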